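(* Let $(\mathcal E,\langle\,,\rangle,D,\psi)$ be a coherent tangent bundle on $M^2$, $p$ a peak, and $\gamma\colon[0,\varepsilon)\to M^2$ a singular curve with $\gamma(0)=p$ such that $\gamma(t)$ is an $A_2$-point for each $t>0$. Then the singular curvature measure $\kappa_s\,d\tau$ is continuous on $[0,\varepsilon)$; that is, writing $\kappa_s\,d\tau=\kappa_s(t)\,|\psi(\dot\gamma(t))|\,dt$ for $t>0$, the density $\kappa_s(t)\,|\psi(\dot\gamma(t))|$ extends continuously (in particular is bounded) up to $t=0$. Here $d\tau$ is the arclength measure of $\gamma$ with respect to $ds^2=\psi^*\langle\,,\rangle$.
   Context: A coherent tangent bundle over an oriented $2$-manifold $M^2$ is a tuple $(\mathcal E,\langle\,,\rangle,D,\psi)$: $\mathcal E$ an orientable rank-$2$ vector bundle with fiber metric $\langle\,,\rangle$ and metric connection $D$, $\psi\colon TM^2\to\mathcal E$ a bundle homomorphism with $D_X\psi(Y)-D_Y\psi(X)=\psi([X,Y])$. Fix a co-orientation $\mu$ (a section of $\mathcal E^*\wedge\mathcal E^*$ with $\mu(e_1,e_2)=\pm1$ on orthonormal frames). Singular points: $\psi_p$ not bijective; $\Sigma$ singular set; on a positively oriented chart, $\lambda=\mu(\psi(\partial_u),\psi(\partial_v))$. Non-degenerate singular point: $d\lambda\neq0$; then $\Sigma$ is locally a regular curve and the null direction $\ker\psi_p$ is one-dimensional. $A_2$-point: non-degenerate with null direction transversal to the singular curve. Peak: a singular non-$A_2$ point $p$ with a neighborhood $U$ such that $\Sigma\cap(U\setminus\{p\})$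 consists of $A_2$-points, $\operatorname{rank}\psi_p=1$, and $\Sigma\cap U$ is a finite (possibly empty) union of $C^1$-regular curves starting from $p$. Singular curvature along a singular curve $\gamma(t)$ of $A_2$-points: with $\eta(t)$ a nonvanishing null vector field along $\gamma$ such that $\{\dot\gamma,\eta\}$ is positively oriented, $\kappa_s=\operatorname{sgn}(d\lambda(\eta))\,\mu(\psi(\dot\gamma),D_t\psi(\dot\gamma))/|\psi(\dot\gamma)|^3$. *)

theory Defs
  imports "HOL-Analysis.Analysis"
begin

text \<open>Local model: the surface is (an open subset U of) the oriented plane with
coordinates (u,v); the bundle E is trivialised by a positively oriented orthonormal
frame, so fibres are real \<times> real with the standard metric.  A metric connection is
then D_X s = X(s) + omega(X) J s, J the rotation by +90 degrees, omega = w1 du + w2 dv.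
The homomorphism psi is given by psiU = psi(d/du), psiV = psi(d/dv).\<close>

type_synonym pt = "real \<times> real"

fun Ck :: "nat \<Rightarrow> ('a::real_normed_vector \<Rightarrow> 'b::real_normed_vector) \<Rightarrow> 'a set \<Rightarrow> bool" where
  "Ck 0 f S = continuous_on S f"
| "Ck (Suc k) f S = (f differentiable_on S \<and> (\<forall>v. Ck k (\<lambda>x. frechet_derivative f (at x) v) S))"

definition smooth_on :: "('a::real_normed_vector \<Rightarrow> 'b::real_normed_vector) \<Rightarrow> 'a set \<Rightarrow> bool" where
  "smooth_on f S \<longleftrightarrow> (\<forall>k. Ck k f S)"

definition mu :: "pt \<Rightarrow> pt \<Rightarrow> real" where
  "mu a b = fst a * snd b - snd a * fst b"

definition Jrot :: "pt \<Rightarrow> pt" where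
  "Jrot a = (- snd a, fst a)"

definition pd_u :: "(pt \<Rightarrow> 'b::real_normed_vector) \<Rightarrow> pt \<Rightarrow> 'b" where
  "pd_u f x = frechet_derivative f (at x) (1, 0)"

definition pd_v :: "(pt \<Rightarrow> 'b::real_normed_vector) \<Rightarrow> pt \<Rightarrow> 'b" where
  "pd_v f x = frechet_derivative f (at x) (0, 1)"

text \<open>Coherent tangent bundle data (smooth) with the compatibility condition
D_u psi(d/dv) - D_v psi(d/du) = psi([d/du,d/dv]) = 0.\<close>
definition coherent_tb :: "pt set \<Rightarrow> (pt \<Rightarrow> pt) \<Rightarrow> (pt \<Rightarrow> pt) \<Rightarrow> (pt \<Rightarrow> real) \<Rightarrow> (pt \<Rightarrow> real) \<Rightarrow> bool" where
  "coherent_tb U psiU psiV w1 w2 \<longleftrightarrow> open U \<and>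
     smooth_on psiU U \<and> smooth_on psiV U \<and> smooth_on w1 U \<and> smooth_on w2 U \<and>
     (\<forall>x\<in>U. pd_u psiV x + w1 x *\<^sub>R Jrot (psiV x) = pd_v psiU x + w2 x *\<^sub>R Jrot (psiU x))"

definition psi :: "(pt \<Rightarrow> pt) \<Rightarrow> (pt \<Rightarrow> pt) \<Rightarrow> pt \<Rightarrow> pt \<Rightarrow> pt" where
  "psi psiU psiV x X = fst X *\<^sub>R psiU x + snd X *\<^sub>R psiV x"

definition lam :: "(pt \<Rightarrow> pt) \<Rightarrow> (pt \<Rightarrow> pt) \<Rightarrow> pt \<Rightarrow> real" where
  "lam psiU psiV x = mu (psiU x) (psiV x)"

definition dlam :: "(pt \<Rightarrow> pt) \<Rightarrow> (pt \<Rightarrow> pt) \<Rightarrow> pt \<Rightarrow> pt \<Rightarrow> real" where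
  "dlam psiU psiV x = frechet_derivative (lam psiU psiV) (at x)"

definition sing_set :: "pt set \<Rightarrow> (pt \<Rightarrow> pt) \<Rightarrow> (pt \<Rightarrow> pt) \<Rightarrow> pt set" where
  "sing_set U psiU psiV = {x\<in>U. \<not> bij (psi psiU psiV x)}"

definition nondegenerate :: "pt set \<Rightarrow> (pt \<Rightarrow> pt) \<Rightarrow> (pt \<Rightarrow> pt) \<Rightarrow> pt \<Rightarrow> bool" where
  "nondegenerate U psiU psiV x \<longleftrightarrow> x \<in> sing_set U psiU psiV \<and> (\<exists>X. dlam psiU psiV x X \<noteq> 0)"

text \<open>A2-point: nondegenerate, and the null direction ker psi_x is transversal to
the singular curve, whose tangent line at x is ker d lambda_x.\<close>
definition A2_point :: "pt set \<Rightarrow> (pt \<Rightarrow> pt) \<Rightarrow> (pt \<Rightarrow> pt) \<Rightarrow> pt \<Rightarrow> bool" where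
  "A2_point U psiU psiV x \<longleftrightarrow> nondegenerate U psiU psiV x \<and>
     (\<forall>X. psi psiU psiV x X = 0 \<and> dlam psiU psiV x X = 0 \<longrightarrow> X = 0)"

definition C1_regular_curve :: "(real \<Rightarrow> pt) \<Rightarrow> real \<Rightarrow> bool" where
  "C1_regular_curve c d \<longleftrightarrow> 0 < d \<and>
     (\<exists>c'. (\<forall>t\<in>{0..<d}. (c has_vector_derivative c' t) (at t within {0..<d})) \<and>
           continuous_on {0..<d} c' \<and> (\<forall>t\<in>{0..<d}. c' t \<noteq> 0))"

definition is_peak :: "pt set \<Rightarrow> (pt \<Rightarrow> pt) \<Rightarrow> (pt \<Rightarrow> pt) \<Rightarrow> pt \<Rightarrow> bool" where
  "is_peak U psiU psiV p \<longleftrightarrow> p \<in> sing_set U psiU psiV \<and> \<not> A2_point U psiU psiV p \<and>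
     dim (range (psi psiU psiV p)) = 1 \<and>
     (\<exists>V. open V \<and> p \<in> V \<and> V \<subseteq> U \<and>
        (\<forall>x \<in> sing_set U psiU psiV \<inter> V - {p}. A2_point U psiU psiV x) \<and>
        (\<exists>C :: ((real \<Rightarrow> pt) \<times> real) set. finite C \<and>
           (\<forall>(c, d) \<in> C. C1_regular_curve c d \<and> c 0 = p) \<and>
           sing_set U psiU psiV \<inter> V = {p} \<union> (\<Union>(c, d) \<in> C. c ` {0..<d})))"

definition psi_dot :: "(pt \<Rightarrow> pt) \<Rightarrow> (pt \<Rightarrow> pt) \<Rightarrow> (real \<Rightarrow> pt) \<Rightarrow> real \<Rightarrow> pt" where
  "psi_dot psiU psiV g t = psi psiU psiV (g t) (vector_derivative g (at t))"

definition Dt_psi_dot :: "(pt \<Rightarrow> pt) \<Rightarrow> (pt \<Rightarrow> pt) \<Rightarrow> (pt \<Rightarrow> real) \<Rightarrow> (pt \<Rightarrow> real) \<Rightarrow> (real \<Rightarrow> pt) \<Rightarrow> real \<Rightarrow> pt" where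
  "Dt_psi_dot psiU psiV w1 w2 g t =
     vector_derivative (psi_dot psiU psiV g) (at t) +
     (fst (vector_derivative g (at t)) * w1 (g t) + snd (vector_derivative g (at t)) * w2 (g t))
       *\<^sub>R Jrot (psi_dot psiU psiV g t)"

text \<open>singular curvature, eta a null vector with {gamma', eta} positively oriented\<close>
definition kappa_s :: "(pt \<Rightarrow> pt) \<Rightarrow> (pt \<Rightarrow> pt) \<Rightarrow> (pt \<Rightarrow> real) \<Rightarrow> (pt \<Rightarrow> real) \<Rightarrow> (real \<Rightarrow> pt) \<Rightarrow> (real \<Rightarrow> pt) \<Rightarrow> real \<Rightarrow> real" where
  "kappa_s psiU psiV w1 w2 g eta t =
     sgn (dlam psiU psiV (g t) (eta t)) *
     mu (psi_dot psiU psiV g t) (Dt_psi_dot psiU psiV w1 w2 g t) / norm (psi_dot psiU psiV g t) ^ 3"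

end

theory Submission
  imports Defs
begin

text \<open>Along the singular curve \<open>\<lambda> = 0\<close>, so \<open>\<psi>(\<partial>\<^sub>u)\<close> and \<open>\<psi>(\<partial>\<^sub>v)\<close> are
parallel and \<open>\<psi>(\<gamma>')\<close> is a nonzero multiple of whichever of them, \<open>\<Xi>\<close>, does not vanish.
Differentiating \<open>\<mu>(\<psi>(\<gamma>'), \<Xi>\<circ>\<gamma>) = 0\<close> shows that \<psi>(\<gamma>') and \<open>\<Xi>\<circ>\<gamma>\<close>
turn at the same angular speed, so
\<open>\<kappa>\<^sub>s |\<psi>(\<gamma>')| = \<plusminus>(\<mu>(\<Xi>, (\<Xi>\<circ>\<gamma>)')/|\<Xi>|\<^sup>2 + \<omega>(\<gamma>'))\<close>, where the sign is that of
\<open>d\<lambda>(\<eta>)\<close>, constant along the curve by the intermediate value theorem. The right-hand side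
only involves \<open>\<psi>\<close>, its first derivatives, the connection form \<open>\<omega>\<close> and the one-sided
derivative of \<open>\<gamma>\<close>, so it is continuous wherever \<open>\<Xi> \<noteq> 0\<close>. At a peak \<open>\<psi>\<close> has rank one,
so one of \<open>\<psi>(\<partial>\<^sub>u)\<close>, \<open>\<psi>(\<partial>\<^sub>v)\<close> is nonzero at \<open>p\<close>, and the density extends continuously
to \<open>t = 0\<close>.\<close>

lemma bounded_bilinear_mu: "bounded_bilinear mu"
proof
  fix a a' b b' :: pt and r :: real
  show "mu (a + a') b = mu a b + mu a' b" "mu a (b + b') = mu a b + mu a b'"
    "mu (r *\<^sub>R a) b = r *\<^sub>R mu a b" "mu a (r *\<^sub>R b) = r *\<^sub>R mu a b"
    by (simp_all add: mu_def algebra_simps)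
next
  have "norm (mu a b) \<le> norm a * norm b * 2" for a b :: pt
  proof -
    have "\<bar>fst x\<bar> \<le> norm x" "\<bar>snd x\<bar> \<le> norm x" for x :: pt
      using norm_fst_le[of "fst x" "snd x"] norm_snd_le[of "snd x" "fst x"] by simp_all
    then have "\<bar>fst a\<bar> \<le> norm a" "\<bar>snd a\<bar> \<le> norm a" "\<bar>fst b\<bar> \<le> norm b" "\<bar>snd b\<bar> \<le> norm b"
      by blast+
    then have "\<bar>fst a * snd b\<bar> \<le> norm a * norm b" "\<bar>snd a * fst b\<bar> \<le> norm a * norm b"
      by (simp_all add: abs_mult mult_mono)
    then show ?thesis unfolding mu_def by simp
  qed
  then show "\<exists>K. \<forall>a b. norm (mu a b) \<le> norm a * norm b * K" by blast
qed

lemma mu_scaleR_left [simp]: "mu (r *\<^sub>R a) b = r * mu a b"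
  and mu_scaleR_right [simp]: "mu a (r *\<^sub>R b) = r * mu a b"
  by (simp_all add: mu_def algebra_simps)

lemma mu_add_right: "mu a (b + c) = mu a b + mu a c"
  by (simp add: mu_def algebra_simps)

lemma mu_add_left: "mu (a + b) c = mu a c + mu b c"
  by (simp add: mu_def algebra_simps)

lemma mu_self [simp]: "mu a a = 0"
  by (simp add: mu_def)

lemma mu_commute: "mu a b = - mu b a"
  by (simp add: mu_def)

lemma norm_pt_power2: "norm (x :: pt) ^ 2 = fst x ^ 2 + snd x ^ 2"
  by (cases x) (simp add: norm_Pair)

lemma mu_Jrot_self: "mu a (Jrot a) = norm a ^ 2"
  unfolding norm_pt_power2 by (simp add: mu_def Jrot_def power2_eq_square)

lemma mu_eq_0_imp_parallel:
  assumes "mu a x = 0" "x \<noteq> 0"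
  shows "a = ((a \<bullet> x) / norm x ^ 2) *\<^sub>R x"
proof -
  have "a = (1 / norm x ^ 2) *\<^sub>R (norm x ^ 2 *\<^sub>R a)"
    using assms(2) by simp
  also have "norm x ^ 2 *\<^sub>R a = (a \<bullet> x) *\<^sub>R x"
    using assms(1) unfolding norm_pt_power2
    by (cases a, cases x) (simp add: mu_def power2_eq_square algebra_simps)
  finally show ?thesis
    by simp
qed

lemma linear_vanishing_at_eq_mu:
  fixes L :: "pt \<Rightarrow> real"
  assumes "linear L" "L a = 0"
  shows "L X * norm a ^ 2 = L (Jrot a) * mu a X"
proof -
  have "norm a ^ 2 *\<^sub>R X = (a \<bullet> X) *\<^sub>R a + mu a X *\<^sub>R Jrot a"
    unfolding norm_pt_power2
    by (cases a, cases X) (simp add: Jrot_def mu_def power2_eq_square algebra_simps)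
  then have "L (norm a ^ 2 *\<^sub>R X) = L ((a \<bullet> X) *\<^sub>R a + mu a X *\<^sub>R Jrot a)"
    by simp
  with assms show ?thesis
    by (simp add: linear_add linear_scale algebra_simps)
qed

lemma linear_pt_eq:
  fixes L :: "pt \<Rightarrow> 'b::real_vector"
  assumes "linear L"
  shows "L v = fst v *\<^sub>R L (1, 0) + snd v *\<^sub>R L (0, 1)"
proof -
  have "v = fst v *\<^sub>R (1, 0) + snd v *\<^sub>R (0, 1)"
    by (simp add: prod_eq_iff)
  then have "L v = L (fst v *\<^sub>R (1, 0) + snd v *\<^sub>R (0, 1))"
    by (rule arg_cong)
  then show ?thesis
    by (simp only: linear_add[OF assms] linear_scale[OF assms])
qed

lemma bij_psi_if_lam_nonzero:
  assumes "lam psiU psiV x \<noteq> 0"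
  shows "bij (psi psiU psiV x)"
proof -
  obtain a1 a2 b1 b2 where ab: "psiU x = (a1, a2)" "psiV x = (b1, b2)"
    by fastforce
  define d where "d = a1 * b2 - a2 * b1"
  have d: "d \<noteq> 0"
    using assms ab by (simp add: d_def lam_def mu_def)
  define inv where "inv y = ((fst y * b2 - snd y * b1) / d, (a1 * snd y - a2 * fst y) / d)" for y :: pt
  have psi_eq: "psi psiU psiV x X = (fst X * a1 + snd X * b1, fst X * a2 + snd X * b2)" for X
    by (simp add: psi_def ab)
  have "psi psiU psiV x (inv y) = y" for y
    using d by (simp add: psi_eq inv_def prod_eq_iff divide_simps) (simp add: d_def algebra_simps)
  moreover have "inv (psi psiU psiV x X) = X" for X
    using d by (simp add: psi_eq inv_def prod_eq_iff divide_simps) (simp add: d_def algebra_simps)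
  ultimately show ?thesis
    by (intro o_bij[where g = inv]) auto
qed

lemma lam_eq_0_if_sing: "x \<in> sing_set U psiU psiV \<Longrightarrow> lam psiU psiV x = 0"
  using bij_psi_if_lam_nonzero unfolding sing_set_def by blast

lemma sgn_constant_if_nonzero:
  fixes h :: "real \<Rightarrow> real"
  assumes "connected S" "continuous_on S h" "\<forall>t\<in>S. h t \<noteq> 0" "x \<in> S" "y \<in> S"
  shows "sgn (h x) = sgn (h y)"
proof (rule ccontr)
  assume "sgn (h x) \<noteq> sgn (h y)"
  then have "min (h x) (h y) \<le> 0" "0 \<le> max (h x) (h y)"
    by (auto simp: sgn_if split: if_splits)
  moreover have "connected (h ` S)"
    using assms(2,1) by (rule connected_continuous_image)
  moreover have "min (h x) (h y) \<in> h ` S" "max (h x) (h y) \<in> h ` S"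
    using assms(4,5) by (simp_all add: min_def max_def)
  ultimately have "0 \<in> h ` S"
    unfolding connected_iff_interval by blast
  with assms(3) show False by auto
qed

lemma Ck_imp_continuous_on: "Ck k f S \<Longrightarrow> continuous_on S f"
  by (cases k) (auto intro: differentiable_imp_continuous_on)

lemma Ck_Suc_imp_has_derivative:
  assumes "Ck (Suc k) f S" "open S" "x \<in> S"
  shows "(f has_derivative frechet_derivative f (at x)) (at x)"
proof -
  have "f differentiable (at x)"
    using assms differentiable_on_eq_differentiable_at by auto
  then show ?thesis
    using frechet_derivative_works by blast
qed

lemma Ck_Suc_imp_continuous_on_derivative:
  "Ck (Suc k) f S \<Longrightarrow> continuous_on S (\<lambda>x. frechet_derivative f (at x) v)"
  using Ck_imp_continuous_on by auto

lemma Ck_Suc_Suc_imp_derivative_differentiable: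
  assumes "Ck (Suc (Suc k)) f S" "open S" "x \<in> S"
  shows "(\<lambda>x. frechet_derivative f (at x) v) differentiable (at x)"
  using assms differentiable_on_eq_differentiable_at by auto

lemma continuous_on_frechet_derivative_comp:
  fixes f :: "pt \<Rightarrow> 'b::real_normed_vector"
  assumes f: "Ck (Suc k) f U" and "open U"
    and g: "continuous_on S g" "g ` S \<subseteq> U" and a: "continuous_on S a"
  shows "continuous_on S (\<lambda>t. frechet_derivative f (at (g t)) (a t))"
proof -
  have "continuous_on S (\<lambda>t. frechet_derivative f (at (g t)) v)" for v
    using continuous_on_compose2[OF Ck_Suc_imp_continuous_on_derivative[OF f] g] .
  then have "continuous_on S (\<lambda>t. fst (a t) *\<^sub>R frechet_derivative f (at (g t)) (1, 0)
      + snd (a t) *\<^sub>R frechet_derivative f (at (g t)) (0, 1))"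
    by (intro continuous_intros a)
  then show ?thesis
  proof (rule continuous_on_eq)
    fix t assume "t \<in> S"
    then have "linear (frechet_derivative f (at (g t)))"
      using has_derivative_linear Ck_Suc_imp_has_derivative[OF f \<open>open U\<close>] g(2) by blast
    then show "fst (a t) *\<^sub>R frechet_derivative f (at (g t)) (1, 0)
        + snd (a t) *\<^sub>R frechet_derivative f (at (g t)) (0, 1) = frechet_derivative f (at (g t)) (a t)"
      by (rule linear_pt_eq[symmetric])
  qed
qed

lemma differentiable_transform_within_open:
  assumes "f differentiable (at x)" "open S" "x \<in> S" "\<And>y. y \<in> S \<Longrightarrow> f y = g y"
  shows "g differentiable (at x)"
  using assms has_derivative_transform_within_open unfolding differentiable_def by blast

lemma lam_has_derivative:
  assumes "Ck (Suc k) psiU U" "Ck (Suc k) psiV U" "open U" "x \<in> U"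
  shows "(lam psiU psiV has_derivative (\<lambda>v. mu (psiU x) (frechet_derivative psiV (at x) v)
           + mu (frechet_derivative psiU (at x) v) (psiV x))) (at x)"
  unfolding lam_def[abs_def]
  by (rule bounded_bilinear.FDERIV[OF bounded_bilinear_mu
        Ck_Suc_imp_has_derivative[OF assms(1,3,4)] Ck_Suc_imp_has_derivative[OF assms(2,3,4)]])

lemma dlam_eq:
  assumes "Ck (Suc k) psiU U" "Ck (Suc k) psiV U" "open U" "x \<in> U"
  shows "dlam psiU psiV x v = mu (psiU x) (frechet_derivative psiV (at x) v)
           + mu (frechet_derivative psiU (at x) v) (psiV x)"
  unfolding dlam_def frechet_derivative_at[OF lam_has_derivative[OF assms], symmetric] by simp

lemma lam_has_derivative_dlam:
  assumes "Ck (Suc k) psiU U" "Ck (Suc k) psiV U" "open U" "x \<in> U"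
  shows "(lam psiU psiV has_derivative dlam psiU psiV x) (at x)"
proof -
  have "lam psiU psiV differentiable (at x)"
    using lam_has_derivative[OF assms] by (rule differentiableI)
  then show ?thesis
    unfolding dlam_def using frechet_derivative_works by blast
qed

lemma continuous_on_dlam_comp:
  assumes psi: "Ck (Suc k) psiU U" "Ck (Suc k) psiV U" and "open U"
    and g: "continuous_on S g" "g ` S \<subseteq> U" and a: "continuous_on S a"
  shows "continuous_on S (\<lambda>t. dlam psiU psiV (g t) (a t))"
proof -
  have "continuous_on S (\<lambda>t. mu (psiU (g t)) (frechet_derivative psiV (at (g t)) (a t))
      + mu (frechet_derivative psiU (at (g t)) (a t)) (psiV (g t)))"
    unfolding mu_def
    using continuous_on_compose2[OF Ck_imp_continuous_on[OF psi(1)] g]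
      continuous_on_compose2[OF Ck_imp_continuous_on[OF psi(2)] g]
      continuous_on_frechet_derivative_comp[OF psi(1) \<open>open U\<close> g a]
      continuous_on_frechet_derivative_comp[OF psi(2) \<open>open U\<close> g a]
    by (intro continuous_intros) auto
  moreover have "g t \<in> U" if "t \<in> S" for t
    using g(2) that by blast
  ultimately show ?thesis
    by (simp add: dlam_eq[OF psi \<open>open U\<close>] cong: continuous_on_cong)
qed

lemma mu_derivative_eq_if_parallel:
  assumes P: "(P has_vector_derivative P') (at t)" and x: "(x has_vector_derivative x') (at t)"
    and S: "open S" "t \<in> S" and parallel: "\<And>s. s \<in> S \<Longrightarrow> mu (P s) (x s) = 0"
    and "x t \<noteq> 0"
  shows "mu (P t) P' * norm (x t) ^ 2 = norm (P t) ^ 2 * mu (x t) x'"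
proof -
  have "((\<lambda>s. mu (P s) (x s)) has_vector_derivative mu (P t) x' + mu P' (x t)) (at t)"
    using bounded_bilinear.has_vector_derivative[OF bounded_bilinear_mu P x] .
  moreover have "((\<lambda>s. mu (P s) (x s)) has_vector_derivative 0) (at t)"
    by (rule has_vector_derivative_transform_within_open[OF has_vector_derivative_const S])
      (use parallel in auto)
  ultimately have derivative_0: "mu (P t) x' + mu P' (x t) = 0"
    by (rule vector_derivative_unique_at)
  define c where "c = (P t \<bullet> x t) / norm (x t) ^ 2"
  have Pc: "P t = c *\<^sub>R x t"
    unfolding c_def by (rule mu_eq_0_imp_parallel[OF parallel[OF S(2)] \<open>x t \<noteq> 0\<close>])
  have "mu (P t) P' = - c * mu P' (x t)"
    using Pc mu_commute[of "x t" P'] by simp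
  also have "\<dots> = c\<^sup>2 * mu (x t) x'"
    using derivative_0 Pc by (simp add: add_eq_0_iff power2_eq_square)
  moreover have "norm (P t) ^ 2 = c\<^sup>2 * norm (x t) ^ 2"
    using Pc by (simp add: power_mult_distrib)
  ultimately show ?thesis
    by simp
qed

lemma eventually_pos_at_within_nonneg:
  fixes t0 :: real
  assumes "S \<subseteq> {0..}" "0 \<le> t0"
  shows "\<forall>\<^sub>F t in at t0 within S. 0 < t"
proof (cases "t0 = 0")
  case True
  show ?thesis
    unfolding eventually_at_filter by (rule always_eventually) (use assms(1) True in force)
next
  case False
  with assms(2) have "0 < t0"
    by simp
  then show ?thesis
    by (rule order_tendstoD(1)[OF tendsto_ident_at])
qed

lemma peak_psi_nonzero:
  assumes "is_peak U psiU psiV p"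
  shows "psiU p \<noteq> 0 \<or> psiV p \<noteq> 0"
proof (rule ccontr)
  assume "\<not> (psiU p \<noteq> 0 \<or> psiV p \<noteq> 0)"
  then have "range (psi psiU psiV p) = {0}"
    by (auto simp: psi_def)
  moreover have "dim (range (psi psiU psiV p)) = 1"
    using assms unfolding is_peak_def by blast
  ultimately show False
    by simp
qed

text \<open>\<open>g'\<close> is the one-sided derivative of the curve on \<open>[0, \<epsilon>)\<close>; at \<open>t = 0\<close> it
differs in general from \<open>vector_derivative g (at 0)\<close>, which is why it is a parameter.\<close>

locale A2_singular_curve =
  fixes U :: "pt set" and psiU psiV :: "pt \<Rightarrow> pt" and w1 w2 :: "pt \<Rightarrow> real"
    and g g' eta :: "real \<Rightarrow> pt" and \<epsilon> :: real
  assumes open_U: "open U"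
    and C1_psiU: "Ck 1 psiU U" and C1_psiV: "Ck 1 psiV U"
    and continuous_w1: "continuous_on U w1" and continuous_w2: "continuous_on U w2"
    and singular: "g ` {0..<\<epsilon>} \<subseteq> sing_set U psiU psiV"
    and has_vector_derivative_g:
      "\<And>t. t \<in> {0..<\<epsilon>} \<Longrightarrow> (g has_vector_derivative g' t) (at t within {0..<\<epsilon>})"
    and continuous_g': "continuous_on {0..<\<epsilon>} g'"
    and g'_nonzero: "\<And>t. t \<in> {0..<\<epsilon>} \<Longrightarrow> g' t \<noteq> 0"
    and C2_g: "Ck 2 g {0<..<\<epsilon>}"
    and A2: "\<And>t. t \<in> {0<..<\<epsilon>} \<Longrightarrow> A2_point U psiU psiV (g t)"
    and null_vector: "\<And>t. t \<in> {0<..<\<epsilon>} \<Longrightarrow> eta t \<noteq> 0 \<and> psi psiU psiV (g t) (eta t) = 0 \<and>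
        mu (vector_derivative g (at t)) (eta t) > 0"
begin

lemmas C1_psi = C1_psiU[unfolded One_nat_def] C1_psiV[unfolded One_nat_def]

lemma C1_generator: "Xi \<in> {psiU, psiV} \<Longrightarrow> Ck (Suc 0) Xi U"
  using C1_psi by auto

lemma image_g_subset_U: "g ` {0..<\<epsilon>} \<subseteq> U"
  using singular unfolding sing_set_def by blast

lemma g_in_U: "t \<in> {0..<\<epsilon>} \<Longrightarrow> g t \<in> U"
  using image_g_subset_U by blast

lemma lam_g: "t \<in> {0..<\<epsilon>} \<Longrightarrow> lam psiU psiV (g t) = 0"
  using singular lam_eq_0_if_sing by blast

lemma continuous_on_g: "continuous_on {0..<\<epsilon>} g"
  by (rule continuous_on_vector_derivative[OF has_vector_derivative_g])

lemma continuous_on_comp_g: "continuous_on U f \<Longrightarrow> continuous_on {0..<\<epsilon>} (\<lambda>t. f (g t))"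
  by (rule continuous_on_compose2[OF _ continuous_on_g image_g_subset_U])

lemma has_vector_derivative_g_at:
  assumes t: "t \<in> {0<..<\<epsilon>}"
  shows "(g has_vector_derivative g' t) (at t)"
proof -
  have "t \<in> {0..<\<epsilon>}" "{0<..<\<epsilon>} \<subseteq> {0..<\<epsilon>}"
    using t by auto
  then have "(g has_vector_derivative g' t) (at t within {0<..<\<epsilon>})"
    by (rule has_vector_derivative_within_subset[OF has_vector_derivative_g])
  then show ?thesis
    by (simp add: at_within_open[OF t open_greaterThanLessThan])
qed

lemma vector_derivative_g: "t \<in> {0<..<\<epsilon>} \<Longrightarrow> vector_derivative g (at t) = g' t"
  by (rule vector_derivative_at[OF has_vector_derivative_g_at])

lemma has_vector_derivative_comp_g:
  assumes "(f has_derivative f') (at (g t))" "t \<in> {0<..<\<epsilon>}"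
  shows "((\<lambda>s. f (g s)) has_vector_derivative f' (g' t)) (at t)"
proof -
  have "((f \<circ> g) has_vector_derivative f' (g' t)) (at t within UNIV)"
    by (rule vector_derivative_diff_chain_within)
      (use has_vector_derivative_g_at[OF assms(2)] has_derivative_at_withinI[OF assms(1)] in auto)
  then show ?thesis
    by (simp add: o_def)
qed

lemma has_vector_derivative_generator_comp_g:
  assumes "Xi \<in> {psiU, psiV}" "t \<in> {0<..<\<epsilon>}"
  shows "((\<lambda>s. Xi (g s)) has_vector_derivative frechet_derivative Xi (at (g t)) (g' t)) (at t)"
proof -
  have "g t \<in> U"
    using assms(2) g_in_U by auto
  from Ck_Suc_imp_has_derivative[OF C1_generator[OF assms(1)] open_U this] assms(2)
  show ?thesis
    by (rule has_vector_derivative_comp_g)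
qed

lemma g'_differentiable:
  assumes t: "t \<in> {0<..<\<epsilon>}"
  shows "g' differentiable (at t)"
proof (rule differentiable_transform_within_open[OF _ open_greaterThanLessThan t])
  have "Ck (Suc (Suc 0)) g {0<..<\<epsilon>}"
    using C2_g by (simp only: numeral_2_eq_2)
  then show "(\<lambda>s. frechet_derivative g (at s) 1) differentiable (at t)"
    by (rule Ck_Suc_Suc_imp_derivative_differentiable[OF _ open_greaterThanLessThan t])
  fix s assume "s \<in> {0<..<\<epsilon>}"
  from frechet_derivative_at[OF has_vector_derivative_g_at[OF this, unfolded has_vector_derivative_def]]
  have "(\<lambda>r. r *\<^sub>R g' s) = frechet_derivative g (at s)" .
  from fun_cong[OF this, of 1]
  show "frechet_derivative g (at s) 1 = g' s"
    by simp
qed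

lemma tangent_in_kernel_dlam:
  assumes t: "t \<in> {0<..<\<epsilon>}"
  shows "dlam psiU psiV (g t) (g' t) = 0"
proof -
  have "((\<lambda>s. lam psiU psiV (g s)) has_vector_derivative dlam psiU psiV (g t) (g' t)) (at t)"
    using has_vector_derivative_comp_g[OF lam_has_derivative_dlam[OF C1_psi open_U g_in_U] t] t
    by simp
  moreover have "((\<lambda>s. lam psiU psiV (g s)) has_vector_derivative 0) (at t)"
    by (rule has_vector_derivative_transform_within_open[OF has_vector_derivative_const _ t])
      (use lam_g in auto)
  ultimately show ?thesis
    by (rule vector_derivative_unique_at)
qed

lemma psi_dot_eq:
  "t \<in> {0<..<\<epsilon>} \<Longrightarrow> psi_dot psiU psiV g t = fst (g' t) *\<^sub>R psiU (g t) + snd (g' t) *\<^sub>R psiV (g t)"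
  by (simp add: psi_dot_def psi_def vector_derivative_g)

lemma psi_dot_nonzero:
  assumes t: "t \<in> {0<..<\<epsilon>}"
  shows "psi_dot psiU psiV g t \<noteq> 0"
proof
  assume "psi_dot psiU psiV g t = 0"
  then have "psi psiU psiV (g t) (g' t) = 0"
    using vector_derivative_g[OF t] by (simp add: psi_dot_def)
  with tangent_in_kernel_dlam[OF t] A2[OF t] have "g' t = 0"
    unfolding A2_point_def by blast
  with g'_nonzero t show False
    by auto
qed

lemma psi_dot_has_vector_derivative:
  assumes t: "t \<in> {0<..<\<epsilon>}"
  shows "(psi_dot psiU psiV g has_vector_derivative vector_derivative (psi_dot psiU psiV g) (at t)) (at t)"
proof -
  have "(\<lambda>s. psiU (g s)) differentiable (at t)" "(\<lambda>s. psiV (g s)) differentiable (at t)"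
    by (rule differentiableI_vector[OF has_vector_derivative_generator_comp_g[OF _ t]], simp)+
  moreover have "(\<lambda>s. fst (g' s)) differentiable (at t)" "(\<lambda>s. snd (g' s)) differentiable (at t)"
    by (rule differentiable_compose[OF bounded_linear_imp_differentiable g'_differentiable[OF t]],
        simp_all add: bounded_linear_fst bounded_linear_snd)+
  ultimately have "(\<lambda>s. fst (g' s) *\<^sub>R psiU (g s) + snd (g' s) *\<^sub>R psiV (g s)) differentiable (at t)"
    by (intro differentiable_add differentiable_scaleR)
  then have "psi_dot psiU psiV g differentiable (at t)"
    by (rule differentiable_transform_within_open[OF _ open_greaterThanLessThan t]) (simp add: psi_dot_eq)
  then show ?thesis
    by (rule vector_derivative_works[THEN iffD1])
qed

lemma psi_dot_parallel:
  assumes "Xi \<in> {psiU, psiV}" "s \<in> {0<..<\<epsilon>}"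
  shows "mu (psi_dot psiU psiV g s) (Xi (g s)) = 0"
proof -
  have lam0: "mu (psiU (g s)) (psiV (g s)) = 0"
    using lam_g[of s] assms(2) by (simp add: lam_def)
  from assms(1) consider "Xi = psiU" | "Xi = psiV"
    by blast
  then show ?thesis
  proof cases
    case 1
    then show ?thesis
      using lam0
      by (simp add: psi_dot_eq[OF assms(2)] mu_add_left mu_commute[of "psiV (g s)" "psiU (g s)"])
  next
    case 2
    then show ?thesis
      using lam0 by (simp add: psi_dot_eq[OF assms(2)] mu_add_left)
  qed
qed

lemma dlam_normal:
  assumes t: "t \<in> {0<..<\<epsilon>}"
  shows "dlam psiU psiV (g t) (Jrot (g' t)) \<noteq> 0"
    and "sgn (dlam psiU psiV (g t) (eta t)) = sgn (dlam psiU psiV (g t) (Jrot (g' t)))"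
proof -
  have "g t \<in> U"
    using t g_in_U by auto
  from has_derivative_linear[OF lam_has_derivative_dlam[OF C1_psi open_U this]]
  have "linear (dlam psiU psiV (g t))" .
  then have eq: "dlam psiU psiV (g t) (eta t) * norm (g' t) ^ 2
      = dlam psiU psiV (g t) (Jrot (g' t)) * mu (g' t) (eta t)"
    by (rule linear_vanishing_at_eq_mu[where L = "dlam psiU psiV (g t)" and a = "g' t",
          OF _ tangent_in_kernel_dlam[OF t]])
  have "dlam psiU psiV (g t) (eta t) \<noteq> 0"
    using A2[OF t] null_vector[OF t] unfolding A2_point_def by blast
  moreover have "mu (g' t) (eta t) > 0"
    using null_vector[OF t] vector_derivative_g[OF t] by simp
  moreover have "norm (g' t) ^ 2 > 0"
    using g'_nonzero t by simp
  ultimately show "dlam psiU psiV (g t) (Jrot (g' t)) \<noteq> 0"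
    "sgn (dlam psiU psiV (g t) (eta t)) = sgn (dlam psiU psiV (g t) (Jrot (g' t)))"
    using arg_cong[OF eq, of sgn] by (auto simp: sgn_mult sgn_0_0)
qed

text \<open>Any point of \<open>(0, \<epsilon>)\<close> serves, by \<open>sgn_dlam_eta\<close> below.\<close>

definition dlam_sign :: real where
  "dlam_sign = sgn (dlam psiU psiV (g (\<epsilon> / 2)) (eta (\<epsilon> / 2)))"

lemma sgn_dlam_eta:
  assumes t: "t \<in> {0<..<\<epsilon>}"
  shows "sgn (dlam psiU psiV (g t) (eta t)) = dlam_sign"
proof -
  have mid: "\<epsilon> / 2 \<in> {0<..<\<epsilon>}"
    using t by auto
  have "continuous_on {0..<\<epsilon>} (\<lambda>t. Jrot (g' t))"
    unfolding Jrot_def by (intro continuous_intros continuous_g')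
  from continuous_on_dlam_comp[OF C1_psi open_U continuous_on_g image_g_subset_U this]
  have "continuous_on {0<..<\<epsilon>} (\<lambda>t. dlam psiU psiV (g t) (Jrot (g' t)))"
    by (rule continuous_on_subset) auto
  from sgn_constant_if_nonzero[OF connected_Ioo this _ t mid]
  show ?thesis
    unfolding dlam_sign_def using dlam_normal t mid by simp
qed

definition curvature_density :: "(pt \<Rightarrow> pt) \<Rightarrow> real \<Rightarrow> real" where
  "curvature_density Xi t = dlam_sign *
     (mu (Xi (g t)) (frechet_derivative Xi (at (g t)) (g' t)) / norm (Xi (g t)) ^ 2
      + w1 (g t) * fst (g' t) + w2 (g t) * snd (g' t))"

lemma kappa_s_density_eq:
  assumes Xi: "Xi \<in> {psiU, psiV}" and t: "t \<in> {0<..<\<epsilon>}" and nonzero: "Xi (g t) \<noteq> 0"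
  shows "kappa_s psiU psiV w1 w2 g eta t * norm (psi_dot psiU psiV g t) = curvature_density Xi t"
proof -
  define P where "P = psi_dot psiU psiV g"
  define P' where "P' = vector_derivative P (at t)"
  define x' where "x' = frechet_derivative Xi (at (g t)) (g' t)"
  define k where "k = w1 (g t) * fst (g' t) + w2 (g t) * snd (g' t)"
  have x': "((\<lambda>s. Xi (g s)) has_vector_derivative x') (at t)"
    unfolding x'_def by (rule has_vector_derivative_generator_comp_g[OF Xi t])
  have rotation: "mu (P t) P' * norm (Xi (g t)) ^ 2 = norm (P t) ^ 2 * mu (Xi (g t)) x'"
    using mu_derivative_eq_if_parallel[OF psi_dot_has_vector_derivative[OF t] x'
        open_greaterThanLessThan t psi_dot_parallel[OF Xi] nonzero]
    unfolding P_def P'_def .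
  have Dt: "mu (P t) (Dt_psi_dot psiU psiV w1 w2 g t) = mu (P t) P' + k * norm (P t) ^ 2"
    unfolding Dt_psi_dot_def P_def P'_def k_def
    by (simp add: vector_derivative_g[OF t] mu_add_right mu_Jrot_self algebra_simps)
  have "norm (P t) \<noteq> 0"
    using psi_dot_nonzero[OF t] unfolding P_def by simp
  have "kappa_s psiU psiV w1 w2 g eta t * norm (P t)
      = dlam_sign * (mu (P t) P' + k * norm (P t) ^ 2) / norm (P t) ^ 3 * norm (P t)"
    using Dt by (simp add: kappa_s_def sgn_dlam_eta[OF t] P_def)
  also have "\<dots> = dlam_sign * (mu (P t) P' / norm (P t) ^ 2 + k)"
    using \<open>norm (P t) \<noteq> 0\<close> by (simp add: field_simps power2_eq_square power3_eq_cube)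
  also have "mu (P t) P' / norm (P t) ^ 2 = mu (Xi (g t)) x' / norm (Xi (g t)) ^ 2"
    using rotation nonzero \<open>norm (P t) \<noteq> 0\<close> by (simp add: field_simps)
  finally show ?thesis
    by (simp add: curvature_density_def P_def x'_def k_def algebra_simps)
qed

lemma curvature_density_tendsto:
  assumes Xi: "Xi \<in> {psiU, psiV}" and t0: "t0 \<in> {0..<\<epsilon>}" and nonzero: "Xi (g t0) \<noteq> 0"
  shows "(curvature_density Xi \<longlongrightarrow> curvature_density Xi t0) (at t0 within {0..<\<epsilon>})"
proof -
  have tendsto: "(f \<longlongrightarrow> f t0) (at t0 within {0..<\<epsilon>})" if "continuous_on {0..<\<epsilon>} f"
    for f :: "real \<Rightarrow> 'b::topological_space"
    using that t0 unfolding continuous_on_def by blast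
  have Xi_g: "continuous_on {0..<\<epsilon>} (\<lambda>t. Xi (g t))"
    using Ck_imp_continuous_on[OF C1_generator[OF Xi]] by (rule continuous_on_comp_g)
  have derivative: "continuous_on {0..<\<epsilon>} (\<lambda>t. frechet_derivative Xi (at (g t)) (g' t))"
    using continuous_on_frechet_derivative_comp[OF C1_generator[OF Xi] open_U continuous_on_g
        image_g_subset_U continuous_g'] .
  have w: "continuous_on {0..<\<epsilon>} (\<lambda>t. w1 (g t))" "continuous_on {0..<\<epsilon>} (\<lambda>t. w2 (g t))"
    using continuous_w1 continuous_w2 by (auto intro: continuous_on_comp_g)
  have "norm (Xi (g t0)) ^ 2 \<noteq> 0"
    using nonzero by simp
  then show ?thesis
    unfolding curvature_density_def mu_def
    by (intro tendsto_intros tendsto Xi_g derivative w continuous_g')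
qed

lemma eventually_curvature_density_eq:
  assumes Xi: "Xi \<in> {psiU, psiV}" and t0: "t0 \<in> {0..<\<epsilon>}" and nonzero: "Xi (g t0) \<noteq> 0"
  shows "\<forall>\<^sub>F t in at t0 within {0..<\<epsilon>}.
    0 < t \<and> curvature_density Xi t = kappa_s psiU psiV w1 w2 g eta t * norm (psi_dot psiU psiV g t)"
proof -
  have "((\<lambda>t. Xi (g t)) \<longlongrightarrow> Xi (g t0)) (at t0 within {0..<\<epsilon>})"
    using continuous_on_comp_g[OF Ck_imp_continuous_on[OF C1_generator[OF Xi]]] t0
    unfolding continuous_on_def by blast
  then have "\<forall>\<^sub>F t in at t0 within {0..<\<epsilon>}. Xi (g t) \<noteq> 0"
    using nonzero by (rule tendsto_imp_eventually_ne)
  moreover have "\<forall>\<^sub>F t in at t0 within {0..<\<epsilon>}. 0 < t"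
    by (rule eventually_pos_at_within_nonneg) (use t0 in auto)
  moreover have "\<forall>\<^sub>F t in at t0 within {0..<\<epsilon>}. t \<in> {0..<\<epsilon>}"
    by (simp add: eventually_at_filter)
  ultimately show ?thesis
    by eventually_elim (auto simp: kappa_s_density_eq[OF Xi])
qed

lemma kappa_s_density_continuous_extension:
  assumes "psiU (g 0) \<noteq> 0 \<or> psiV (g 0) \<noteq> 0"
  shows "\<exists>f. continuous_on {0..<\<epsilon>} f \<and>
    (\<forall>t\<in>{0<..<\<epsilon>}. f t = kappa_s psiU psiV w1 w2 g eta t * norm (psi_dot psiU psiV g t))"
proof -
  obtain Xi0 where Xi0: "Xi0 \<in> {psiU, psiV}" "Xi0 (g 0) \<noteq> 0"
    using assms by blast
  define f where "f t = (if t = 0 then curvature_density Xi0 0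
      else kappa_s psiU psiV w1 w2 g eta t * norm (psi_dot psiU psiV g t))" for t
  have "(f \<longlongrightarrow> f t0) (at t0 within {0..<\<epsilon>})" if t0: "t0 \<in> {0..<\<epsilon>}" for t0
  proof -
    obtain Xi where Xi: "Xi \<in> {psiU, psiV}" "Xi (g t0) \<noteq> 0" and f_t0: "f t0 = curvature_density Xi t0"
    proof (cases "t0 = 0")
      case True
      with Xi0 that show ?thesis by (simp add: f_def)
    next
      case False
      with t0 have t0': "t0 \<in> {0<..<\<epsilon>}" by auto
      then have "psiU (g t0) \<noteq> 0 \<or> psiV (g t0) \<noteq> 0"
        using psi_dot_nonzero[OF t0'] psi_dot_eq[OF t0'] by auto
      then obtain Xi where "Xi \<in> {psiU, psiV}" "Xi (g t0) \<noteq> 0"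
        by blast
      with that kappa_s_density_eq t0' False show ?thesis by (simp add: f_def)
    qed
    from eventually_curvature_density_eq[OF Xi(1) t0 Xi(2)]
    have "\<forall>\<^sub>F t in at t0 within {0..<\<epsilon>}. curvature_density Xi t = f t"
      by (rule eventually_mono) (simp add: f_def)
    from Lim_transform_eventually[OF curvature_density_tendsto[OF Xi(1) t0 Xi(2)] this]
    show ?thesis
      using f_t0 by simp
  qed
  then have "continuous_on {0..<\<epsilon>} f"
    unfolding continuous_on_def by blast
  then show ?thesis
    by (auto simp: f_def)
qed

end

theorem mainTheorem4:
  fixes U :: "pt set" and psiU psiV :: "pt \<Rightarrow> pt" and w1 w2 :: "pt \<Rightarrow> real"
    and p :: pt and g eta :: "real \<Rightarrow> pt" and \<epsilon> :: real
  assumes ctb: "coherent_tb U psiU psiV w1 w2"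
    and peak: "is_peak U psiU psiV p"
    and eps: "0 < \<epsilon>"
    and g_sing: "g ` {0..<\<epsilon>} \<subseteq> sing_set U psiU psiV"
    and g0: "g 0 = p"
    and g_reg: "C1_regular_curve g \<epsilon>"
    and g_smooth: "smooth_on g {0<..<\<epsilon>}"
    and g_A2: "\<forall>t\<in>{0<..<\<epsilon>}. A2_point U psiU psiV (g t)"
    and eta: "\<forall>t\<in>{0<..<\<epsilon>}. eta t \<noteq> 0 \<and> psi psiU psiV (g t) (eta t) = 0 \<and>
                 mu (vector_derivative g (at t)) (eta t) > 0"
  shows "\<exists>f. continuous_on {0..<\<epsilon>} f \<and>
           (\<forall>t\<in>{0<..<\<epsilon>}. f t = kappa_s psiU psiV w1 w2 g eta t * norm (psi_dot psiU psiV g t))"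
proof -
  obtain g' where g': "\<forall>t\<in>{0..<\<epsilon>}. (g has_vector_derivative g' t) (at t within {0..<\<epsilon>})"
    "continuous_on {0..<\<epsilon>} g'" "\<forall>t\<in>{0..<\<epsilon>}. g' t \<noteq> 0"
    using g_reg unfolding C1_regular_curve_def by blast
  have U: "open U" and smooth: "smooth_on psiU U" "smooth_on psiV U" "smooth_on w1 U" "smooth_on w2 U"
    using ctb unfolding coherent_tb_def by blast+
  have "A2_singular_curve U psiU psiV w1 w2 g g' eta \<epsilon>"
  proof unfold_locales
    show "Ck 1 psiU U" "Ck 1 psiV U" "Ck 2 g {0<..<\<epsilon>}"
      using smooth g_smooth unfolding smooth_on_def by blast+
    show "continuous_on U w1" "continuous_on U w2"
      using smooth Ck_imp_continuous_on unfolding smooth_on_def by blast+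
  qed (use U g_sing g' g_A2 eta in auto)
  moreover have "psiU (g 0) \<noteq> 0 \<or> psiV (g 0) \<noteq> 0"
    using peak_psi_nonzero[OF peak] g0 by simp
  ultimately show ?thesis
    by (rule A2_singular_curve.kappa_s_density_continuous_extension)
qed

end
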